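(* Let $f_{\mu_1\cdots\mu_p}$ be a rank-$p$ antisymmetric affine tensor field on $(M,g)$ and let $h_{\mu_1\cdots\mu_p}$ be a covariantly constant antisymmetric tensor field of the same rank $p$ ($\nabla_\sigma h_{\mu_1\cdots\mu_p}=0$). Then the symmetric tensor field $$K_{\mu\nu}=f_{(\mu|\rho_1\cdots\rho_{p-1}|}\,h_{\nu)}{}^{\rho_1\cdots\rho_{p-1}}$$ is a rank-$2$ symmetric affine tensor field, i.e. $\nabla_\sigma\nabla_{(\mu}K_{\nu\rho)}=0$.
   Context: $(M,g)$ is a smooth $n$-dimensional pseudo-Riemannian manifold with Levi-Civita connection $\nabla$; indices are raised and lowered with $g$. Symmetrization $(\cdots)$ and antisymmetrization $[\cdots]$ over $k$ indices carry weight $1/k!$, and indices enclosed in vertical bars $|\cdots|$ are excluded from (anti)symmetrization. A rank-$p$ antisymmetric affine tensor field (AAT) is a totally antisymmetric tensor field $f_{\mu_1\cdots\mu_p}=f_{[\mu_1\cdots\mu_p]}$ satisfying $\nabla_\mu\nabla_{(\nu}f_{\rho_1)\rho_2\cdots\rho_p}=0$. A rank-$q$ symmetric affine tensor field (SAT) is a totally symmetric tensor field $K_{\mu_1\cdots\mu_q}=K_{(\mu_1\cdots\mu_q)}$ satisfying $\nabla_\mu\nabla_{(\nu}K_{\rho_1\cdots\rho_q)}=0$. *)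

theory Defs
  imports "HOL-Analysis.Analysis" "HOL-Combinatorics.Permutations"
begin

text \<open>Local-coordinate model: a chart domain U (open subset of R^n, coordinates indexed
by a finite type 'n). A covariant tensor field of rank r is a function
T :: point => index list => real, where only index lists of length r matter.\<close>

definition pd :: "'n::finite \<Rightarrow> (real^'n \<Rightarrow> real) \<Rightarrow> real^'n \<Rightarrow> real" where
  "pd i F x = deriv (\<lambda>t. F (x + t *\<^sub>R axis i 1)) 0"

fun iterpd :: "'n::finite list \<Rightarrow> (real^'n \<Rightarrow> real) \<Rightarrow> (real^'n \<Rightarrow> real)" where
  "iterpd [] F = F"
| "iterpd (i # is) F = pd i (iterpd is F)"

definition Cinf_on :: "(real^'n::finite) set \<Rightarrow> (real^'n \<Rightarrow> real) \<Rightarrow> bool" where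
  "Cinf_on U F \<longleftrightarrow> (\<forall>is. iterpd is F differentiable_on U)"

definition metric_field :: "(real^'n::finite) set \<Rightarrow> (real^'n \<Rightarrow> real^'n^'n) \<Rightarrow> bool" where
  "metric_field U G \<longleftrightarrow>
     (\<forall>x\<in>U. transpose (G x) = G x \<and> invertible (G x)) \<and>
     (\<forall>i j. Cinf_on U (\<lambda>x. G x $ i $ j))"

definition ginv :: "(real^'n::finite \<Rightarrow> real^'n^'n) \<Rightarrow> real^'n \<Rightarrow> 'n \<Rightarrow> 'n \<Rightarrow> real" where
  "ginv G x i j = matrix_inv (G x) $ i $ j"

definition christoffel :: "(real^'n::finite \<Rightarrow> real^'n^'n) \<Rightarrow> real^'n \<Rightarrow> 'n \<Rightarrow> 'n \<Rightarrow> 'n \<Rightarrow> real" where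
  "christoffel G x l m n = (1/2) * (\<Sum>k\<in>UNIV. ginv G x l k *
      (pd m (\<lambda>y. G y $ k $ n) x + pd n (\<lambda>y. G y $ k $ m) x - pd k (\<lambda>y. G y $ m $ n) x))"

text \<open>Levi-Civita covariant derivative of a covariant tensor field; the derivative
index is placed first: (nabla T)_{s j1...jr} = nabla_s T_{j1...jr}.\<close>
fun nabla :: "(real^'n::finite \<Rightarrow> real^'n^'n) \<Rightarrow> (real^'n \<Rightarrow> 'n list \<Rightarrow> real)
              \<Rightarrow> real^'n \<Rightarrow> 'n list \<Rightarrow> real" where
  "nabla G T x [] = 0"
| "nabla G T x (s # js) = pd s (\<lambda>y. T y js) x
     - (\<Sum>k<length js. \<Sum>l\<in>UNIV. christoffel G x l s (js ! k) * T x (js[k := l]))"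

definition perm_idx :: "(nat \<Rightarrow> nat) \<Rightarrow> 'a list \<Rightarrow> 'a list" where
  "perm_idx \<sigma> is = map (\<lambda>k. is ! \<sigma> k) [0..<length is]"

definition symmetrize :: "nat set \<Rightarrow> ('a list \<Rightarrow> real) \<Rightarrow> 'a list \<Rightarrow> real" where
  "symmetrize A t is = (1 / fact (card A)) * (\<Sum>\<sigma>\<in>{\<sigma>. \<sigma> permutes A}. t (perm_idx \<sigma> is))"

definition antisymmetrize :: "nat set \<Rightarrow> ('a list \<Rightarrow> real) \<Rightarrow> 'a list \<Rightarrow> real" where
  "antisymmetrize A t is =
     (1 / fact (card A)) * (\<Sum>\<sigma>\<in>{\<sigma>. \<sigma> permutes A}. of_int (sign \<sigma>) * t (perm_idx \<sigma> is))"

definition tensor_field :: "(real^'n::finite) set \<Rightarrow> nat \<Rightarrow> (real^'n \<Rightarrow> 'n list \<Rightarrow> real) \<Rightarrow> bool" where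
  "tensor_field U r T \<longleftrightarrow> (\<forall>is. length is = r \<longrightarrow> Cinf_on U (\<lambda>x. T x is))"

definition antisym_tensor_field :: "(real^'n::finite) set \<Rightarrow> nat \<Rightarrow> (real^'n \<Rightarrow> 'n list \<Rightarrow> real) \<Rightarrow> bool" where
  "antisym_tensor_field U r T \<longleftrightarrow> tensor_field U r T \<and>
     (\<forall>x\<in>U. \<forall>is. length is = r \<longrightarrow> T x is = antisymmetrize {0..<r} (T x) is)"

definition sym_tensor_field :: "(real^'n::finite) set \<Rightarrow> nat \<Rightarrow> (real^'n \<Rightarrow> 'n list \<Rightarrow> real) \<Rightarrow> bool" where
  "sym_tensor_field U r T \<longleftrightarrow> tensor_field U r T \<and>
     (\<forall>x\<in>U. \<forall>is. length is = r \<longrightarrow> T x is = symmetrize {0..<r} (T x) is)"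

text \<open>Antisymmetric affine tensor field: nabla_mu nabla_(nu f_rho1) rho2...rhop = 0,
i.e. symmetrization over positions 1 and 2 of nabla nabla f.\<close>
definition AAT :: "(real^'n::finite) set \<Rightarrow> (real^'n \<Rightarrow> real^'n^'n) \<Rightarrow> nat
                   \<Rightarrow> (real^'n \<Rightarrow> 'n list \<Rightarrow> real) \<Rightarrow> bool" where
  "AAT U G p f \<longleftrightarrow> antisym_tensor_field U p f \<and>
     (\<forall>x\<in>U. \<forall>is. length is = p + 2 \<longrightarrow> symmetrize {1..<3} (nabla G (nabla G f) x) is = 0)"

text \<open>Symmetric affine tensor field: nabla_mu nabla_(nu K_rho1...rhoq) = 0,
i.e. symmetrization over positions 1..q+1 of nabla nabla K.\<close>
definition SAT :: "(real^'n::finite) set \<Rightarrow> (real^'n \<Rightarrow> real^'n^'n) \<Rightarrow> nat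
                   \<Rightarrow> (real^'n \<Rightarrow> 'n list \<Rightarrow> real) \<Rightarrow> bool" where
  "SAT U G q K \<longleftrightarrow> sym_tensor_field U q K \<and>
     (\<forall>x\<in>U. \<forall>is. length is = q + 2 \<longrightarrow> symmetrize {1..<q+2} (nabla G (nabla G K) x) is = 0)"

definition contr :: "(real^'n::finite \<Rightarrow> real^'n^'n) \<Rightarrow> nat \<Rightarrow> (real^'n \<Rightarrow> 'n list \<Rightarrow> real)
                     \<Rightarrow> (real^'n \<Rightarrow> 'n list \<Rightarrow> real) \<Rightarrow> real^'n \<Rightarrow> 'n \<Rightarrow> 'n \<Rightarrow> real" where
  "contr G p f h x m n =
     (\<Sum>rs\<in>{rs. length rs = p - 1}. \<Sum>as\<in>{as. length as = p - 1}.
        f x (m # rs) * (\<Prod>k<p - 1. ginv G x (rs ! k) (as ! k)) * h x (n # as))"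

definition Kfield :: "(real^'n::finite \<Rightarrow> real^'n^'n) \<Rightarrow> nat \<Rightarrow> (real^'n \<Rightarrow> 'n list \<Rightarrow> real)
                     \<Rightarrow> (real^'n \<Rightarrow> 'n list \<Rightarrow> real) \<Rightarrow> real^'n \<Rightarrow> 'n list \<Rightarrow> real" where
  "Kfield G p f h x is =
     (if length is = 2 then (contr G p f h x (is ! 0) (is ! 1) + contr G p f h x (is ! 1) (is ! 0)) / 2
      else 0)"

end

theory Submission
  imports Defs
begin

text \<open>Write \<open>p = P + 1\<close> and let \<open>C(T)\<close> be the contraction of the last \<open>P\<close> indices of a covariant
  tensor \<open>T\<close> with the last \<open>P\<close> indices of \<open>h\<close> through the inverse metric, so that
  \<open>K = (C(f) + C(f)\<^sup>t) / 2\<close>. Because \<open>h\<close> is parallel and the Levi-Civita connection is metric,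
  \<open>\<nabla>\<close> commutes with this contraction, \<open>\<nabla>C(T) = C(\<nabla>T)\<close>; hence \<open>\<nabla>\<^sub>\<sigma>\<nabla>\<^sub>\<tau>K\<^sub>\<mu>\<^sub>\<nu>\<close> is the
  symmetrization in \<open>\<mu>\<nu>\<close> of \<open>C(\<nabla>\<nabla>f)\<^sub>\<sigma>\<^sub>\<tau>\<^sub>\<mu>\<^sub>\<nu>\<close>. The AAT equation makes \<open>\<nabla>\<^sub>\<sigma>\<nabla>\<^sub>\<tau>f\<^sub>\<mu>\<^sub>\<dots>\<close>, and so
  \<open>C(\<nabla>\<nabla>f)\<close>, antisymmetric in \<open>\<tau>\<mu>\<close>. Symmetrizing first in \<open>\<mu>\<nu>\<close> does not change the total
  symmetrization over \<open>\<tau>\<mu>\<nu>\<close>, and the total symmetrization of a tensor antisymmetric in two of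
  its indices vanishes.\<close>

section \<open>Partial derivatives\<close>

lemma pd_has_derivative:
  assumes "(F has_derivative F') (at x)"
  shows "pd i F x = F' (axis i 1)"
proof -
  have "((\<lambda>t. F (x + t *\<^sub>R axis i 1)) has_derivative (\<lambda>t. F' (t *\<^sub>R axis i 1))) (at 0)"
    by (rule has_derivative_compose[where f="\<lambda>t. x + t *\<^sub>R axis i 1" and g=F])
       (auto intro!: derivative_eq_intros assms[simplified])
  then have "((\<lambda>t. F (x + t *\<^sub>R axis i 1)) has_derivative (\<lambda>t. F' (axis i 1) * t)) (at 0)"
    by (simp add: linear.scaleR[OF has_derivative_linear[OF assms]] mult.commute)
  then have "((\<lambda>t. F (x + t *\<^sub>R axis i 1)) has_field_derivative F' (axis i 1)) (at 0)"
    by (simp add: has_field_derivative_def)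
  then show ?thesis
    unfolding pd_def by (rule DERIV_imp_deriv)
qed

lemma pd_frechet_derivative:
  "F differentiable (at x) \<Longrightarrow> pd i F x = frechet_derivative F (at x) (axis i 1)"
  by (rule pd_has_derivative) (simp add: frechet_derivative_works[symmetric])

lemma pd_const [simp]: "pd i (\<lambda>y. c) x = 0"
  using pd_has_derivative[OF has_derivative_const] .

lemma pd_add:
  assumes "F differentiable (at x)" "G differentiable (at x)"
  shows "pd i (\<lambda>y. F y + G y) x = pd i F x + pd i G x"
  using pd_has_derivative[OF has_derivative_add[OF assms[unfolded frechet_derivative_works]]]
  by (simp add: pd_frechet_derivative assms)

lemma pd_mult:
  assumes "F differentiable (at x)" "G differentiable (at x)"
  shows "pd i (\<lambda>y. F y * G y) x = pd i F x * G x + F x * pd i G x"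
  using pd_has_derivative[OF has_derivative_mult[OF assms[unfolded frechet_derivative_works]]]
  by (simp add: pd_frechet_derivative assms algebra_simps)

lemma pd_cmult:
  "F differentiable (at x) \<Longrightarrow> pd i (\<lambda>y. c * F y) x = c * pd i F x"
  using pd_mult[OF differentiable_const] by simp

lemma pd_mult3:
  assumes "A differentiable (at x)" "B differentiable (at x)" "C differentiable (at x)"
  shows "pd i (\<lambda>y. A y * B y * C y) x =
    pd i A x * B x * C x + A x * pd i B x * C x + A x * B x * pd i C x"
  using assms by (simp add: pd_mult differentiable_mult algebra_simps)

lemma pd_inverse:
  assumes "F differentiable (at x)" "F x \<noteq> 0"
  shows "pd i (\<lambda>y. inverse (F y)) x = - pd i F x * inverse (F x) * inverse (F x)"
  using pd_has_derivative[OF Deriv.has_derivative_inverse[OF assms(2) assms(1)[unfolded frechet_derivative_works]]]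
  by (simp add: pd_frechet_derivative assms algebra_simps)

lemma pd_sum:
  assumes "finite A" "\<And>a. a \<in> A \<Longrightarrow> F a differentiable (at x)"
  shows "pd i (\<lambda>y. \<Sum>a\<in>A. F a y) x = (\<Sum>a\<in>A. pd i (F a) x)"
proof -
  have "((\<lambda>y. \<Sum>a\<in>A. F a y) has_derivative (\<lambda>h. \<Sum>a\<in>A. frechet_derivative (F a) (at x) h)) (at x)"
    using assms(2) by (intro has_derivative_sum) (simp add: frechet_derivative_works[symmetric])
  then show ?thesis
    using assms by (simp add: pd_has_derivative pd_frechet_derivative)
qed

lemma pd_prod:
  assumes "finite A" "\<And>a. a \<in> A \<Longrightarrow> F a differentiable (at x)"
  shows "pd i (\<lambda>y. \<Prod>a\<in>A. F a y) x = (\<Sum>a\<in>A. pd i (F a) x * (\<Prod>b\<in>A - {a}. F b x))"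
proof -
  have "((\<lambda>y. \<Prod>a\<in>A. F a y) has_derivative
      (\<lambda>h. \<Sum>a\<in>A. frechet_derivative (F a) (at x) h * (\<Prod>b\<in>A - {a}. F b x))) (at x)"
    using assms(2) by (intro has_derivative_prod) (simp add: frechet_derivative_works[symmetric])
  then show ?thesis
    using assms by (simp add: pd_has_derivative pd_frechet_derivative)
qed

lemma pd_cong:
  assumes "open U" "x \<in> U" "\<And>y. y \<in> U \<Longrightarrow> F y = G y"
  shows "pd i F x = pd i G x"
proof -
  have "((\<lambda>t. x + t *\<^sub>R axis i 1) \<longlongrightarrow> x) (nhds 0)"
    by (auto intro!: tendsto_eq_intros filterlim_ident)
  then have "\<forall>\<^sub>F t in nhds 0. x + t *\<^sub>R axis i 1 \<in> U"
    using assms(1,2) by (rule topological_tendstoD)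
  then have "\<forall>\<^sub>F t in nhds 0. F (x + t *\<^sub>R axis i 1) = G (x + t *\<^sub>R axis i 1)"
    by eventually_elim (rule assms(3))
  then show ?thesis
    unfolding pd_def by (rule deriv_cong_ev) simp
qed

section \<open>Smooth functions\<close>

lemma iterpd_append: "iterpd (is @ js) F = iterpd is (iterpd js F)"
  by (induction "is") auto

lemma iterpd_Cons_const: "iterpd (i # is) (\<lambda>y. c) = (\<lambda>y. 0)"
proof (induction "is" arbitrary: i)
  case Nil
  then show ?case by (simp add: fun_eq_iff)
next
  case (Cons j "is")
  have "iterpd (i # j # is) (\<lambda>y. c) = pd i (iterpd (j # is) (\<lambda>y. c))"
    by (rule iterpd.simps(2))
  then show ?case by (simp only: Cons.IH) (simp add: fun_eq_iff)
qed

lemma iterpd_cong: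
  assumes "open U" "x \<in> U" "\<And>y. y \<in> U \<Longrightarrow> F y = G y"
  shows "iterpd is F x = iterpd is G x"
  using assms(2)
proof (induction "is" arbitrary: x)
  case Nil
  then show ?case using assms(3) by simp
next
  case (Cons i "is")
  have "pd i (iterpd is F) x = pd i (iterpd is G) x"
    by (rule pd_cong[OF assms(1) Cons.prems]) (rule Cons.IH)
  then show ?case by simp
qed

lemma differentiable_at_cong_open:
  assumes "open U" "x \<in> U" "\<And>y. y \<in> U \<Longrightarrow> F y = G y" "F differentiable (at x)"
  shows "G differentiable (at x)"
proof -
  from assms(4) obtain D where "(F has_derivative D) (at x)"
    unfolding differentiable_def by blast
  then have "(G has_derivative D) (at x)"
    by (rule has_derivative_transform_within_open[OF _ assms(1,2)]) (use assms(3) in auto)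
  then show ?thesis
    unfolding differentiable_def by blast
qed

text \<open>Finite differentiability order; the smoothness of products and quotients is proved by
  induction on it.\<close>

definition Ck_on :: "nat \<Rightarrow> (real^'n::finite) set \<Rightarrow> (real^'n \<Rightarrow> real) \<Rightarrow> bool" where
  "Ck_on k U F \<longleftrightarrow> (\<forall>is. length is \<le> k \<longrightarrow> (\<forall>x\<in>U. iterpd is F differentiable (at x)))"

context
  fixes U :: "(real^'n::finite) set"
  assumes U: "open U"
begin

lemma Ck_onD: "Ck_on k U F \<Longrightarrow> length is \<le> k \<Longrightarrow> x \<in> U \<Longrightarrow> iterpd is F differentiable (at x)"
  unfolding Ck_on_def by blast

lemma Ck_on_differentiable: "Ck_on k U F \<Longrightarrow> x \<in> U \<Longrightarrow> F differentiable (at x)"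
  using Ck_onD[of k F "[]"] by simp

lemma Ck_on_mono: "Ck_on k U F \<Longrightarrow> j \<le> k \<Longrightarrow> Ck_on j U F"
  unfolding Ck_on_def by auto

lemma Ck_on_pd: "Ck_on (Suc k) U F \<Longrightarrow> Ck_on k U (pd i F)"
  unfolding Ck_on_def
proof (intro allI impI ballI)
  fix "is" :: "'n list" and x
  assume "\<forall>is. length is \<le> Suc k \<longrightarrow> (\<forall>x\<in>U. iterpd is F differentiable (at x))"
    and "length is \<le> k" "x \<in> U"
  then have "iterpd (is @ [i]) F differentiable (at x)" by simp
  then show "iterpd is (pd i F) differentiable (at x)" by (simp add: iterpd_append)
qed

lemma Ck_on_const: "Ck_on k U (\<lambda>y. c)"
  unfolding Ck_on_def
proof (intro allI impI ballI)
  fix "is" :: "'n list" and x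
  show "iterpd is (\<lambda>y. c) differentiable (at x)"
    by (cases "is") (simp_all only: iterpd.simps(1) iterpd_Cons_const differentiable_const)
qed

lemma Ck_on_cong:
  assumes "\<And>y. y \<in> U \<Longrightarrow> F y = G y" "Ck_on k U F"
  shows "Ck_on k U G"
  unfolding Ck_on_def
proof (intro allI impI ballI)
  fix "is" :: "'n list" and x
  assume a: "length is \<le> k" "x \<in> U"
  show "iterpd is G differentiable (at x)"
    by (rule differentiable_at_cong_open[OF U a(2) _ Ck_onD[OF assms(2) a]])
      (simp add: iterpd_cong[OF U _ assms(1)])
qed

lemma iterpd_add:
  assumes "Ck_on k U F" "Ck_on k U G" "length is \<le> Suc k" "x \<in> U"
  shows "iterpd is (\<lambda>y. F y + G y) x = iterpd is F x + iterpd is G x"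
  using assms(3,4)
proof (induction "is" arbitrary: x)
  case Nil
  then show ?case by simp
next
  case (Cons i "is")
  have "iterpd (i # is) (\<lambda>y. F y + G y) x = pd i (\<lambda>y. iterpd is F y + iterpd is G y) x"
    unfolding iterpd.simps(2) by (rule pd_cong[OF U Cons.prems(2)]) (use Cons in simp)
  also have "\<dots> = iterpd (i # is) F x + iterpd (i # is) G x"
    using Cons.prems by (simp add: pd_add Ck_onD[OF assms(1)] Ck_onD[OF assms(2)])
  finally show ?case .
qed

lemma Ck_on_add:
  assumes "Ck_on k U F" "Ck_on k U G"
  shows "Ck_on k U (\<lambda>y. F y + G y)"
  unfolding Ck_on_def
proof (intro allI impI ballI)
  fix "is" :: "'n list" and x
  assume a: "length is \<le> k" "x \<in> U"
  have sum: "(\<lambda>y. iterpd is F y + iterpd is G y) differentiable (at x)"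
    using Ck_onD[OF assms(1) a] Ck_onD[OF assms(2) a] by simp
  show "iterpd is (\<lambda>y. F y + G y) differentiable (at x)"
    by (rule differentiable_at_cong_open[OF U a(2) _ sum]) (use iterpd_add[OF assms] a in auto)
qed

lemma Ck_on_Suc_iff_pd:
  "Ck_on (Suc k) U F \<longleftrightarrow> (\<forall>x\<in>U. F differentiable (at x)) \<and> (\<forall>i. Ck_on k U (pd i F))"
proof
  assume diff_pd: "(\<forall>x\<in>U. F differentiable (at x)) \<and> (\<forall>i. Ck_on k U (pd i F))"
  then show "Ck_on (Suc k) U F"
    unfolding Ck_on_def
  proof (intro allI impI ballI)
    fix "is" :: "'n list" and x
    assume "length is \<le> Suc k" "x \<in> U"
    then show "iterpd is F differentiable (at x)"
    proof (cases "is" rule: rev_cases)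
      case (snoc js i)
      then show ?thesis
        using diff_pd \<open>length is \<le> Suc k\<close> \<open>x \<in> U\<close> by (simp add: iterpd_append Ck_on_def)
    qed (use diff_pd in simp)
  qed
qed (use Ck_on_differentiable Ck_on_pd in blast)

lemma Ck_on_mult: "Ck_on k U F \<Longrightarrow> Ck_on k U G \<Longrightarrow> Ck_on k U (\<lambda>y. F y * G y)"
proof (induction k arbitrary: F G)
  case 0
  then show ?case
    unfolding Ck_on_def using Ck_on_differentiable by auto
next
  case (Suc k)
  have "Ck_on k U (pd i (\<lambda>y. F y * G y))" for i
  proof (rule Ck_on_cong)
    show "Ck_on k U (\<lambda>y. pd i F y * G y + F y * pd i G y)"
      using Suc.prems by (intro Ck_on_add Suc.IH Ck_on_pd) (simp_all add: Ck_on_mono)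
    show "pd i F y * G y + F y * pd i G y = pd i (\<lambda>y. F y * G y) y" if "y \<in> U" for y
      using that Suc.prems by (simp add: pd_mult Ck_on_differentiable)
  qed
  then show ?case
    using Suc.prems by (simp add: Ck_on_Suc_iff_pd Ck_on_differentiable)
qed

lemma Ck_on_inverse:
  assumes "\<And>y. y \<in> U \<Longrightarrow> F y \<noteq> 0"
  shows "Ck_on k U F \<Longrightarrow> Ck_on k U (\<lambda>y. inverse (F y))"
proof (induction k)
  case 0
  then show ?case
    unfolding Ck_on_def using Ck_on_differentiable assms by auto
next
  case (Suc k)
  have inv: "Ck_on k U (\<lambda>y. inverse (F y))"
    using Suc Ck_on_mono by simp
  have "Ck_on k U (pd i (\<lambda>y. inverse (F y)))" for i
  proof (rule Ck_on_cong)
    have "Ck_on k U (\<lambda>y. - pd i F y)"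
      using Ck_on_mult[OF Ck_on_const[of k "-1"] Ck_on_pd[OF Suc.prems, of i]] by simp
    then show "Ck_on k U (\<lambda>y. - pd i F y * inverse (F y) * inverse (F y))"
      by (intro Ck_on_mult inv)
    show "- pd i F y * inverse (F y) * inverse (F y) = pd i (\<lambda>y. inverse (F y)) y" if "y \<in> U" for y
      using that Suc.prems assms by (simp add: pd_inverse Ck_on_differentiable)
  qed
  then show ?case
    using Suc.prems assms by (simp add: Ck_on_Suc_iff_pd Ck_on_differentiable)
qed

lemma Cinf_on_iff_Ck_on: "Cinf_on U F \<longleftrightarrow> (\<forall>k. Ck_on k U F)"
  unfolding Cinf_on_def Ck_on_def differentiable_on_eq_differentiable_at[OF U] by blast

lemma Cinf_on_differentiable: "Cinf_on U F \<Longrightarrow> x \<in> U \<Longrightarrow> F differentiable (at x)"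
  unfolding Cinf_on_iff_Ck_on by (blast intro: Ck_on_differentiable)

lemma Cinf_on_const: "Cinf_on U (\<lambda>y. c)"
  unfolding Cinf_on_iff_Ck_on by (simp add: Ck_on_const)

lemma Cinf_on_add: "Cinf_on U F \<Longrightarrow> Cinf_on U G \<Longrightarrow> Cinf_on U (\<lambda>y. F y + G y)"
  unfolding Cinf_on_iff_Ck_on by (simp add: Ck_on_add)

lemma Cinf_on_mult: "Cinf_on U F \<Longrightarrow> Cinf_on U G \<Longrightarrow> Cinf_on U (\<lambda>y. F y * G y)"
  unfolding Cinf_on_iff_Ck_on by (simp add: Ck_on_mult)

lemma Cinf_on_inverse:
  "Cinf_on U F \<Longrightarrow> (\<And>y. y \<in> U \<Longrightarrow> F y \<noteq> 0) \<Longrightarrow> Cinf_on U (\<lambda>y. inverse (F y))"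
  unfolding Cinf_on_iff_Ck_on by (blast intro: Ck_on_inverse)

lemma Cinf_on_pd: "Cinf_on U F \<Longrightarrow> Cinf_on U (pd i F)"
  unfolding Cinf_on_iff_Ck_on by (blast intro: Ck_on_pd)

lemma Cinf_on_cong: "Cinf_on U F \<Longrightarrow> (\<And>y. y \<in> U \<Longrightarrow> F y = G y) \<Longrightarrow> Cinf_on U G"
  unfolding Cinf_on_iff_Ck_on by (blast intro: Ck_on_cong)

lemma Cinf_on_diff:
  assumes "Cinf_on U F" "Cinf_on U G"
  shows "Cinf_on U (\<lambda>y. F y - G y)"
  using Cinf_on_add[OF assms(1) Cinf_on_mult[OF Cinf_on_const[of "-1"] assms(2)]] by simp

lemma Cinf_on_divide:
  assumes "Cinf_on U F" "Cinf_on U G" "\<And>y. y \<in> U \<Longrightarrow> G y \<noteq> 0"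
  shows "Cinf_on U (\<lambda>y. F y / G y)"
  using Cinf_on_mult[OF assms(1) Cinf_on_inverse[OF assms(2,3)]] by (simp add: divide_inverse)

lemma Cinf_on_sum:
  "finite A \<Longrightarrow> (\<And>a. a \<in> A \<Longrightarrow> Cinf_on U (F a)) \<Longrightarrow> Cinf_on U (\<lambda>y. \<Sum>a\<in>A. F a y)"
  by (induction A rule: finite_induct) (simp_all add: Cinf_on_const Cinf_on_add)

lemma Cinf_on_prod:
  "finite A \<Longrightarrow> (\<And>a. a \<in> A \<Longrightarrow> Cinf_on U (F a)) \<Longrightarrow> Cinf_on U (\<lambda>y. \<Prod>a\<in>A. F a y)"
  by (induction A rule: finite_induct) (simp_all add: Cinf_on_const Cinf_on_mult)

lemma Cinf_on_det: "(\<And>i j. Cinf_on U (\<lambda>y. M y $ i $ j)) \<Longrightarrow> Cinf_on U (\<lambda>y. det (M y))"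
  unfolding det_def by (intro Cinf_on_sum Cinf_on_mult Cinf_on_const Cinf_on_prod) auto

end

section \<open>The metric and its inverse\<close>

lemma matrix_inv_right: "invertible A \<Longrightarrow> A ** matrix_inv A = mat 1"
  unfolding matrix_inv_def invertible_def by (rule someI2_ex) auto

lemma matrix_inv_left: "invertible A \<Longrightarrow> matrix_inv A ** A = mat 1"
  unfolding matrix_inv_def invertible_def by (rule someI2_ex) auto

lemma transpose_matrix_inv_symmetric:
  fixes A :: "real^'n::finite^'n"
  assumes "transpose A = A" "invertible A"
  shows "transpose (matrix_inv A) = matrix_inv A"
proof -
  let ?B = "matrix_inv A"
  have left: "transpose ?B ** A = mat 1"
    using arg_cong[OF matrix_inv_right[OF assms(2)], of transpose] assms(1)
    by (simp add: matrix_transpose_mul transpose_mat)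
  have "transpose ?B = transpose ?B ** (A ** ?B)"
    by (simp add: matrix_inv_right[OF assms(2)] matrix_mul_rid)
  also have "\<dots> = ?B"
    by (simp add: matrix_mul_assoc left matrix_mul_lid)
  finally show ?thesis .
qed

lemma sum_kronecker_left: "(\<Sum>c\<in>UNIV. (if (d::'a::finite) = c then 1 else 0) * F c) = (F d :: real)"
proof -
  have "(\<Sum>c\<in>UNIV. (if d = c then 1 else 0) * F c) = (\<Sum>c\<in>UNIV. if c = d then F c else 0)"
    by (rule sum.cong) auto
  then show ?thesis by simp
qed

lemma transpose_nth: "transpose A $ i $ j = A $ j $ i"
  by (simp add: transpose_def)

context
  fixes U :: "(real^'n::finite) set" and G :: "real^'n \<Rightarrow> real^'n^'n"
  assumes U: "open U" and G: "metric_field U G"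
begin

lemma metric_symmetric: "x \<in> U \<Longrightarrow> G x $ a $ b = G x $ b $ a"
  using G unfolding metric_field_def by (metis transpose_nth)

lemma metric_invertible: "x \<in> U \<Longrightarrow> invertible (G x)"
  using G unfolding metric_field_def by blast

lemma ginv_symmetric: "x \<in> U \<Longrightarrow> ginv G x a b = ginv G x b a"
  unfolding ginv_def using transpose_matrix_inv_symmetric[of "G x"] G
  unfolding metric_field_def by (metis transpose_nth)

lemma metric_ginv: "x \<in> U \<Longrightarrow> (\<Sum>c\<in>UNIV. G x $ a $ c * ginv G x c b) = (if a = b then 1 else 0)"
  using arg_cong[where f="\<lambda>M. M $ a $ b", OF matrix_inv_right[OF metric_invertible]]
  unfolding ginv_def by (simp add: matrix_matrix_mult_def mat_def)

lemma ginv_metric: "x \<in> U \<Longrightarrow> (\<Sum>c\<in>UNIV. ginv G x a c * G x $ c $ b) = (if a = b then 1 else 0)"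
  using arg_cong[where f="\<lambda>M. M $ a $ b", OF matrix_inv_left[OF metric_invertible]]
  unfolding ginv_def by (simp add: matrix_matrix_mult_def mat_def)

lemma Cinf_on_metric: "Cinf_on U (\<lambda>y. G y $ i $ j)"
  using G unfolding metric_field_def by blast

lemma ginv_cramer:
  assumes "x \<in> U"
  shows "ginv G x k j =
    det (\<chi> i j'. if j' = k then (if i = j then 1 else 0) else G x $ i $ j') / det (G x)"
proof -
  let ?b = "(\<chi> i. if i = j then 1 else 0) :: real^'n"
  have "det (G x) \<noteq> 0"
    using metric_invertible[OF assms] invertible_det_nz by blast
  moreover have "G x *v (\<chi> k. matrix_inv (G x) $ k $ j) = ?b"
    using arg_cong[where f="\<lambda>M. \<chi> i. M $ i $ j", OF matrix_inv_right[OF metric_invertible[OF assms]]]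
    by (simp add: matrix_matrix_mult_def mat_def matrix_vector_mult_def)
  ultimately have "(\<chi> k. matrix_inv (G x) $ k $ j) =
      (\<chi> k. det (\<chi> i j'. if j' = k then ?b $ i else G x $ i $ j') / det (G x))"
    using cramer by blast
  then have "matrix_inv (G x) $ k $ j = det (\<chi> i j'. if j' = k then ?b $ i else G x $ i $ j') / det (G x)"
    by (metis (no_types, lifting) vec_lambda_beta)
  moreover have "(\<chi> i j'. if j' = k then ?b $ i else G x $ i $ j') =
      (\<chi> i j'. if j' = k then (if i = j then 1 else 0) else G x $ i $ j')"
    by (simp add: vec_eq_iff)
  ultimately show ?thesis
    unfolding ginv_def by simp
qed

lemma Cinf_on_ginv: "Cinf_on U (\<lambda>y. ginv G y k j)"
proof (rule Cinf_on_cong[OF U])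
  let ?M = "\<lambda>y. \<chi> i j'. if j' = k then (if i = j then 1 else 0) else G y $ i $ j'"
  have "Cinf_on U (\<lambda>y. ?M y $ i $ j')" for i j'
    by (cases "j' = k") (simp_all add: Cinf_on_const[OF U] Cinf_on_metric)
  then show "Cinf_on U (\<lambda>y. det (?M y) / det (G y))"
    using metric_invertible invertible_det_nz
    by (intro Cinf_on_divide[OF U] Cinf_on_det[OF U] Cinf_on_metric) auto
qed (simp add: ginv_cramer)

lemma ginv_differentiable: "x \<in> U \<Longrightarrow> (\<lambda>y. ginv G y a b) differentiable (at x)"
  by (rule Cinf_on_differentiable[OF U Cinf_on_ginv])

lemma metric_differentiable: "x \<in> U \<Longrightarrow> (\<lambda>y. G y $ a $ b) differentiable (at x)"
  by (rule Cinf_on_differentiable[OF U Cinf_on_metric])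

lemma Cinf_on_christoffel: "Cinf_on U (\<lambda>y. christoffel G y l m n)"
  unfolding christoffel_def
  by (intro Cinf_on_mult[OF U] Cinf_on_const[OF U] Cinf_on_sum[OF U] Cinf_on_add[OF U]
      Cinf_on_diff[OF U] Cinf_on_ginv Cinf_on_pd[OF U] Cinf_on_metric finite)

text \<open>Differentiating \<open>g g\<^sup>-\<^sup>1 = 1\<close>.\<close>

lemma pd_ginv:
  assumes x: "x \<in> U"
  shows "pd s (\<lambda>y. ginv G y d b) x =
    - (\<Sum>a\<in>UNIV. \<Sum>c\<in>UNIV. ginv G x d a * pd s (\<lambda>y. G y $ a $ c) x * ginv G x c b)"
proof -
  have metric_pd_ginv: "(\<Sum>c\<in>UNIV. G x $ a $ c * pd s (\<lambda>y. ginv G y c b) x) =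
      - (\<Sum>c\<in>UNIV. pd s (\<lambda>y. G y $ a $ c) x * ginv G x c b)" for a
  proof -
    have "0 = pd s (\<lambda>y. if a = b then 1 else 0) x"
      by simp
    also have "\<dots> = pd s (\<lambda>y. \<Sum>c\<in>UNIV. G y $ a $ c * ginv G y c b) x"
      by (rule pd_cong[OF U x]) (simp add: metric_ginv)
    also have "\<dots> = (\<Sum>c\<in>UNIV. pd s (\<lambda>y. G y $ a $ c) x * ginv G x c b
        + G x $ a $ c * pd s (\<lambda>y. ginv G y c b) x)"
      using x by (simp add: pd_sum pd_mult differentiable_mult metric_differentiable ginv_differentiable)
    finally show ?thesis
      by (simp add: sum.distrib eq_neg_iff_add_eq_0 add.commute)
  qed
  have "pd s (\<lambda>y. ginv G y d b) x =
      (\<Sum>c\<in>UNIV. (\<Sum>a\<in>UNIV. ginv G x d a * G x $ a $ c) * pd s (\<lambda>y. ginv G y c b) x)"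
    using x by (simp add: ginv_metric sum_kronecker_left)
  also have "\<dots> = (\<Sum>a\<in>UNIV. ginv G x d a * (\<Sum>c\<in>UNIV. G x $ a $ c * pd s (\<lambda>y. ginv G y c b) x))"
    by (simp add: sum_distrib_left sum_distrib_right mult.assoc) (rule sum.swap)
  also have "\<dots> = - (\<Sum>a\<in>UNIV. \<Sum>c\<in>UNIV. ginv G x d a * pd s (\<lambda>y. G y $ a $ c) x * ginv G x c b)"
    by (simp add: metric_pd_ginv sum_distrib_left sum_negf mult.assoc)
  finally show ?thesis .
qed

text \<open>Metric compatibility of the Levi-Civita connection, \<open>\<nabla>\<^sub>s g\<^sup>a\<^sup>b = 0\<close>, in coordinates.\<close>

lemma pd_ginv_christoffel:
  assumes x: "x \<in> U"
  shows "pd s (\<lambda>y. ginv G y a b) x =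
    - (\<Sum>l\<in>UNIV. christoffel G x a s l * ginv G x l b) - (\<Sum>l\<in>UNIV. christoffel G x b s l * ginv G x a l)"
proof -
  define D where "D = (\<lambda>s a c. pd s (\<lambda>y. G y $ a $ c) x)"
  define gi where "gi = ginv G x"
  have Ds: "D s a c = D s c a" for s a c
    unfolding D_def by (rule pd_cong[OF U x]) (simp add: metric_symmetric)
  have gs: "gi a c = gi c a" for a c
    unfolding gi_def by (rule ginv_symmetric[OF x])
  have \<Gamma>: "christoffel G x l m n = 1/2 * (\<Sum>k\<in>UNIV. gi l k * (D m k n + D n k m - D k m n))" for l m n
    unfolding christoffel_def D_def gi_def ..
  have first: "(\<Sum>l\<in>UNIV. christoffel G x a s l * gi l b) =
      (\<Sum>k\<in>UNIV. \<Sum>l\<in>UNIV. 1/2 * gi a k * (D s k l + D l k s - D k s l) * gi l b)"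
    unfolding \<Gamma> by (subst sum.swap) (simp add: sum_distrib_left sum_distrib_right mult.assoc)
  have "(\<Sum>l\<in>UNIV. christoffel G x b s l * gi a l) =
      (\<Sum>l\<in>UNIV. \<Sum>k\<in>UNIV. 1/2 * gi b k * (D s k l + D l k s - D k s l) * gi a l)"
    unfolding \<Gamma> by (simp add: sum_distrib_left sum_distrib_right mult.assoc)
  also have "\<dots> = (\<Sum>l\<in>UNIV. \<Sum>k\<in>UNIV. 1/2 * gi a l * (D s l k + D l s k - D k l s) * gi k b)"
  proof (intro sum.cong refl)
    fix l k
    show "1/2 * gi b k * (D s k l + D l k s - D k s l) * gi a l =
        1/2 * gi a l * (D s l k + D l s k - D k l s) * gi k b"
      by (simp add: Ds[of s k l] Ds[of l k s] Ds[of k s l] gs[of b k])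
  qed
  finally have second: "(\<Sum>l\<in>UNIV. christoffel G x b s l * gi a l) =
      (\<Sum>k\<in>UNIV. \<Sum>l\<in>UNIV. 1/2 * gi a k * (D s k l + D k s l - D l k s) * gi l b)" .
  have "pd s (\<lambda>y. ginv G y a b) x = - (\<Sum>k\<in>UNIV. \<Sum>l\<in>UNIV. gi a k * D s k l * gi l b)"
    unfolding pd_ginv[OF x] D_def gi_def ..
  also have "\<dots> = - ((\<Sum>k\<in>UNIV. \<Sum>l\<in>UNIV. 1/2 * gi a k * (D s k l + D l k s - D k s l) * gi l b)
       + (\<Sum>k\<in>UNIV. \<Sum>l\<in>UNIV. 1/2 * gi a k * (D s k l + D k s l - D l k s) * gi l b))"
    by (simp add: sum.distrib[symmetric] algebra_simps)
  finally show ?thesis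
    using first second unfolding gi_def by linarith
qed

end

lemma sum_lessThan_add: "(\<Sum>k<(m::nat) + n. f k) = (\<Sum>k<m. f k) + (\<Sum>k<n. f (m + k) :: 'a::comm_monoid_add)"
  by (induction n) (simp_all add: add.assoc)

lemma finite_lists_of_length [simp]: "finite {rs :: 'n::finite list. length rs = P}"
  using finite_lists_length_eq[of "UNIV :: 'n set" P] by simp

lemma sum_lists_of_length_update:
  fixes F :: "'n::finite list \<Rightarrow> 'n \<Rightarrow> 'a::comm_monoid_add"
  assumes "j < P"
  shows "(\<Sum>rs | length rs = P. \<Sum>l\<in>UNIV. F rs l) = (\<Sum>rs | length rs = P. \<Sum>l\<in>UNIV. F (rs[j := l]) (rs ! j))"
proof -
  have "(\<Sum>rs | length rs = P. \<Sum>l\<in>UNIV. F rs l) = (\<Sum>(rs, l) \<in> {rs. length rs = P} \<times> UNIV. F rs l)"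
    by (rule sum.cartesian_product)
  also have "\<dots> = (\<Sum>(rs, l) \<in> {rs. length rs = P} \<times> UNIV. F (rs[j := l]) (rs ! j))"
    by (rule sum.reindex_bij_witness[where i="\<lambda>(rs, l). (rs[j := l], rs ! j)"
          and j="\<lambda>(rs, l). (rs[j := l], rs ! j)"]) (use assms in auto)
  also have "\<dots> = (\<Sum>rs | length rs = P. \<Sum>l\<in>UNIV. F (rs[j := l]) (rs ! j))"
    by (rule sum.cartesian_product[symmetric])
  finally show ?thesis .
qed

lemma perm_idx_length [simp]: "length (perm_idx \<sigma> L) = length L"
  by (simp add: perm_idx_def)

lemma perm_idx_nth [simp]: "k < length L \<Longrightarrow> perm_idx \<sigma> L ! k = L ! \<sigma> k"
  by (simp add: perm_idx_def)

lemma perm_idx_update: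
  assumes "\<sigma> permutes {..<length L}" "k < length L"
  shows "perm_idx \<sigma> (L[k := l]) = (perm_idx \<sigma> L)[inv \<sigma> k := l]"
proof (rule nth_equalityI)
  fix i
  assume "i < length (perm_idx \<sigma> (L[k := l]))"
  then have "\<sigma> i < length L" "i < length L"
    using permutes_in_image[OF assms(1)] by auto
  moreover have "inv \<sigma> k < length L"
    using permutes_in_image[OF permutes_inv[OF assms(1)]] assms(2) by simp
  ultimately show "perm_idx \<sigma> (L[k := l]) ! i = (perm_idx \<sigma> L)[inv \<sigma> k := l] ! i"
    using assms(2) by (auto simp: nth_list_update permutes_inv_eq[OF assms(1)])
qed simp

lemma perm_idx_comp:
  assumes "\<And>k. k < length L \<Longrightarrow> \<tau> k < length L"
  shows "perm_idx \<tau> (perm_idx \<sigma> L) = perm_idx (\<sigma> \<circ> \<tau>) L"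
  unfolding perm_idx_def using assms by (intro nth_equalityI) auto

lemma perm_idx_transpose:
  assumes "i < length L" "j < length L"
  shows "perm_idx (Transposition.transpose i j) L = L[i := L ! j, j := L ! i]"
  using assms by (intro nth_equalityI) (auto simp: nth_list_update Transposition.transpose_def)

section \<open>Symmetrization\<close>

lemma sum_permutes_doubleton:
  assumes "a \<noteq> b"
  shows "(\<Sum>p | p permutes {a, b}. f p) = f id + f (Transposition.transpose a b)"
proof -
  have "(\<Sum>p | p permutes insert a {b}. f p) =
      (\<Sum>c\<in>insert a {b}. \<Sum>q | q permutes {b}. f (Transposition.transpose a c \<circ> q))"
    by (rule sum_over_permutations_insert) (use assms in auto)
  then show ?thesis
    using assms by simp
qed

lemma symmetrize_doubleton:
  "a \<noteq> b \<Longrightarrow> symmetrize {a, b} F L = (F L + F (perm_idx (Transposition.transpose a b) L)) / 2"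
  unfolding symmetrize_def by (simp add: sum_permutes_doubleton perm_idx_def map_nth)

lemma symmetrize_cong:
  "(\<And>L'. length L' = length L \<Longrightarrow> F L' = F' L') \<Longrightarrow> symmetrize A F L = symmetrize A F' L"
  unfolding symmetrize_def by simp

lemma symmetrize_perm_idx:
  assumes "\<tau> permutes A" "A \<subseteq> {..<length L}"
  shows "symmetrize A (\<lambda>L. F (perm_idx \<tau> L)) L = symmetrize A F L"
proof -
  have "\<tau> k < length L" if "k < length L" for k
    using assms that permutes_in_image[OF assms(1)] permutes_not_in[OF assms(1)] by (cases "k \<in> A") auto
  then have "(\<Sum>\<pi> | \<pi> permutes A. F (perm_idx \<tau> (perm_idx \<pi> L))) = (\<Sum>\<pi> | \<pi> permutes A. F (perm_idx (\<pi> \<circ> \<tau>) L))"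
    by (simp add: perm_idx_comp)
  also have "\<dots> = (\<Sum>\<pi> | \<pi> permutes A. F (perm_idx \<pi> L))"
    by (rule sum_permutations_compose_right[OF assms(1), symmetric])
  finally show ?thesis
    unfolding symmetrize_def by simp
qed

lemma symmetrize_average_perm_idx:
  assumes "\<tau> permutes A" "A \<subseteq> {..<length L}"
  shows "symmetrize A (\<lambda>L. (F L + F (perm_idx \<tau> L)) / 2) L = symmetrize A F L"
  using symmetrize_perm_idx[OF assms, of F]
  by (simp add: symmetrize_def sum.distrib sum_divide_distrib[symmetric] field_simps)

lemma symmetrize_eq_0_if_antisymmetric:
  assumes "\<tau> permutes A" "A \<subseteq> {..<length L}"
    and "\<And>L'. length L' = length L \<Longrightarrow> F (perm_idx \<tau> L') = - F L'"
  shows "symmetrize A F L = 0"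
proof -
  have "symmetrize A F L = symmetrize A (\<lambda>L. F (perm_idx \<tau> L)) L"
    by (rule symmetrize_perm_idx[OF assms(1,2), symmetric])
  also have "\<dots> = - symmetrize A F L"
    using assms(3) by (simp add: symmetrize_def sum_negf)
  finally show ?thesis
    by simp
qed

section \<open>The Levi-Civita covariant derivative\<close>

text \<open>With \<open>\<Gamma> l k = \<Gamma>\<^sup>l\<^sub>s\<^sub>k\<close> this is the connection part of \<open>\<nabla>\<^sub>s\<close>: the matrix \<open>\<Gamma>\<close> acts on each
  index of a covariant tensor in turn.\<close>

definition derivation_action :: "('n::finite \<Rightarrow> 'n \<Rightarrow> real) \<Rightarrow> ('n list \<Rightarrow> real) \<Rightarrow> 'n list \<Rightarrow> real" where
  "derivation_action \<Gamma> A js = (\<Sum>k<length js. \<Sum>l\<in>UNIV. \<Gamma> l (js ! k) * A (js[k := l]))"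

lemma derivation_action_singleton: "derivation_action \<Gamma> A [n] = (\<Sum>l\<in>UNIV. \<Gamma> l n * A [l])"
  by (simp add: derivation_action_def)

lemma derivation_action_append:
  "derivation_action \<Gamma> A (xs @ ys) =
    derivation_action \<Gamma> (\<lambda>zs. A (zs @ ys)) xs + derivation_action \<Gamma> (\<lambda>zs. A (xs @ zs)) ys"
  unfolding derivation_action_def length_append sum_lessThan_add
  by (intro arg_cong2[where f="(+)"] sum.cong refl)
    (simp_all add: nth_append list_update_append)

lemma derivation_action_sum:
  "finite I \<Longrightarrow> derivation_action \<Gamma> (\<lambda>zs. \<Sum>i\<in>I. F i zs) js = (\<Sum>i\<in>I. derivation_action \<Gamma> (F i) js)"
  by (induction I rule: finite_induct)
    (simp_all add: derivation_action_def sum.distrib distrib_left)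

lemma derivation_action_mult_right:
  "derivation_action \<Gamma> (\<lambda>zs. A zs * c) js = derivation_action \<Gamma> A js * c"
  by (simp add: derivation_action_def sum_distrib_right mult.assoc)

lemma derivation_action_add:
  "derivation_action \<Gamma> (\<lambda>zs. A zs + B zs) js = derivation_action \<Gamma> A js + derivation_action \<Gamma> B js"
  by (simp add: derivation_action_def sum.distrib distrib_left)

lemma derivation_action_cong:
  "(\<And>zs. length zs = length js \<Longrightarrow> A zs = B zs) \<Longrightarrow> derivation_action \<Gamma> A js = derivation_action \<Gamma> B js"
  by (simp add: derivation_action_def)

lemma derivation_action_perm_idx:
  assumes "\<sigma> permutes {..<length js}"
  shows "derivation_action \<Gamma> (\<lambda>zs. A (perm_idx \<sigma> zs)) js = derivation_action \<Gamma> A (perm_idx \<sigma> js)"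
proof -
  let ?g = "\<lambda>k. \<Sum>l\<in>UNIV. \<Gamma> l (js ! \<sigma> k) * A ((perm_idx \<sigma> js)[k := l])"
  have "derivation_action \<Gamma> A (perm_idx \<sigma> js) = sum ?g {..<length js}"
    unfolding derivation_action_def by simp
  also have "\<dots> = sum (?g \<circ> inv \<sigma>) {..<length js}"
    using sum.permute[OF permutes_inv[OF assms]] .
  also have "\<dots> = derivation_action \<Gamma> (\<lambda>zs. A (perm_idx \<sigma> zs)) js"
    unfolding derivation_action_def
    using assms by (intro sum.cong refl) (simp add: perm_idx_update permutes_inverses)
  finally show ?thesis ..
qed

lemma sum_derivation_action_adjoint:
  "(\<Sum>rs | length rs = P. derivation_action \<Gamma> A rs * B rs) =
    (\<Sum>rs | length rs = P. A rs * derivation_action (\<lambda>a b. \<Gamma> b a) B rs)"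
proof -
  have step: "(\<Sum>rs | length rs = P. \<Sum>l\<in>UNIV. \<Gamma> l (rs ! k) * A (rs[k := l]) * B rs) =
      (\<Sum>rs | length rs = P. \<Sum>l\<in>UNIV. A rs * (\<Gamma> (rs ! k) l * B (rs[k := l])))" if "k < P" for k
    by (subst sum_lists_of_length_update[OF that]) (use that in \<open>intro sum.cong refl, simp\<close>)
  have "(\<Sum>rs | length rs = P. derivation_action \<Gamma> A rs * B rs) =
      (\<Sum>k<P. \<Sum>rs | length rs = P. \<Sum>l\<in>UNIV. \<Gamma> l (rs ! k) * A (rs[k := l]) * B rs)"
    unfolding derivation_action_def sum_distrib_right
    by (subst sum.swap) (intro sum.cong refl, simp)
  also have "\<dots> = (\<Sum>k<P. \<Sum>rs | length rs = P. \<Sum>l\<in>UNIV. A rs * (\<Gamma> (rs ! k) l * B (rs[k := l])))"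
    by (intro sum.cong refl step) simp
  also have "\<dots> = (\<Sum>rs | length rs = P. A rs * derivation_action (\<lambda>a b. \<Gamma> b a) B rs)"
    unfolding derivation_action_def sum_distrib_left
    by (subst sum.swap) (intro sum.cong refl, simp)
  finally show ?thesis .
qed

lemma nabla_Cons_derivation_action:
  "nabla G T x (s # js) = pd s (\<lambda>y. T y js) x - derivation_action (\<lambda>l k. christoffel G x l s k) (T x) js"
  by (simp add: derivation_action_def)

declare nabla.simps(2) [simp del]

lemma nabla_cong:
  assumes "open U" "x \<in> U" "\<And>y zs. y \<in> U \<Longrightarrow> length zs = length js \<Longrightarrow> T y zs = T' y zs"
  shows "nabla G T x (s # js) = nabla G T' x (s # js)"
proof -
  have "pd s (\<lambda>y. T y js) x = pd s (\<lambda>y. T' y js) x"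
    using assms by (intro pd_cong) auto
  moreover have "derivation_action (\<lambda>l k. christoffel G x l s k) (T x) js =
      derivation_action (\<lambda>l k. christoffel G x l s k) (T' x) js"
    using assms by (intro derivation_action_cong) auto
  ultimately show ?thesis
    unfolding nabla_Cons_derivation_action by simp
qed

lemma pd_divide_const: "F differentiable (at x) \<Longrightarrow> pd i (\<lambda>y. F y / c) x = pd i F x / c"
  using pd_cmult[of F x i "inverse c"] by (simp add: divide_inverse mult.commute)

lemma derivation_action_divide_const:
  "derivation_action \<Gamma> (\<lambda>zs. A zs / c) js = derivation_action \<Gamma> A js / c"
  by (simp add: derivation_action_def sum_divide_distrib)

lemma nabla_symmetrization_pair:
  assumes "open U" "x \<in> U" "\<sigma> permutes {..<length js}"
    and S: "tensor_field U (length js) S"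
    and T: "\<And>y zs. y \<in> U \<Longrightarrow> length zs = length js \<Longrightarrow> T y zs = (S y zs + S y (perm_idx \<sigma> zs)) / 2"
  shows "nabla G T x (s # js) = (nabla G S x (s # js) + nabla G S x (s # perm_idx \<sigma> js)) / 2"
proof -
  let ?\<Gamma> = "\<lambda>l k. christoffel G x l s k"
  have diff: "(\<lambda>y. S y zs) differentiable (at x)" if "length zs = length js" for zs
    using S that assms(1,2) unfolding tensor_field_def by (blast intro: Cinf_on_differentiable)
  have "nabla G T x (s # js) = nabla G (\<lambda>y zs. (S y zs + S y (perm_idx \<sigma> zs)) / 2) x (s # js)"
    using T by (intro nabla_cong[OF assms(1,2)])
  also have "\<dots> = (pd s (\<lambda>y. S y js) x + pd s (\<lambda>y. S y (perm_idx \<sigma> js)) x) / 2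
      - (derivation_action ?\<Gamma> (S x) js + derivation_action ?\<Gamma> (\<lambda>zs. S x (perm_idx \<sigma> zs)) js) / 2"
    unfolding nabla_Cons_derivation_action derivation_action_divide_const derivation_action_add
    by (simp add: pd_divide_const pd_add diff differentiable_add)
  also have "\<dots> = (nabla G S x (s # js) + nabla G S x (s # perm_idx \<sigma> js)) / 2"
    unfolding nabla_Cons_derivation_action derivation_action_perm_idx[OF assms(3)]
    by (simp add: field_simps)
  finally show ?thesis .
qed

lemma tensor_field_nabla:
  fixes U :: "(real^'n::finite) set"
  assumes "open U" "metric_field U G" "tensor_field U r T"
  shows "tensor_field U (Suc r) (nabla G T)"
  unfolding tensor_field_def
proof (intro allI impI)
  fix "is" :: "'n list"
  assume "length is = Suc r"
  then obtain s js where "is = s # js" and js: "length js = r"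
    by (cases "is") auto
  moreover have "Cinf_on U (\<lambda>x. nabla G T x (s # js))"
    unfolding nabla.simps using assms(3) js unfolding tensor_field_def
    by (intro Cinf_on_diff[OF assms(1)] Cinf_on_pd[OF assms(1)] Cinf_on_sum[OF assms(1)]
        Cinf_on_mult[OF assms(1)] Cinf_on_christoffel[OF assms(1,2)] finite_lessThan finite) auto
  ultimately show "Cinf_on U (\<lambda>x. nabla G T x is)"
    by simp
qed

section \<open>Contraction with a parallel tensor\<close>

definition ginv_prod :: "(real^'n::finite \<Rightarrow> real^'n^'n) \<Rightarrow> real^'n \<Rightarrow> 'n list \<Rightarrow> 'n list \<Rightarrow> real" where
  "ginv_prod G x rs as = (\<Prod>k<length rs. ginv G x (rs ! k) (as ! k))"

text \<open>\<open>contraction G P T h\<close> contracts the last \<open>P\<close> indices of \<open>T\<close> with the last \<open>P\<close> indices of \<open>h\<close>;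
  the free index of \<open>h\<close> becomes the last index of the result.\<close>

definition contraction :: "(real^'n::finite \<Rightarrow> real^'n^'n) \<Rightarrow> nat \<Rightarrow> (real^'n \<Rightarrow> 'n list \<Rightarrow> real)
    \<Rightarrow> (real^'n \<Rightarrow> 'n list \<Rightarrow> real) \<Rightarrow> real^'n \<Rightarrow> 'n list \<Rightarrow> real" where
  "contraction G P T h x L = (\<Sum>rs | length rs = P. \<Sum>as | length as = P.
      T x (butlast L @ rs) * ginv_prod G x rs as * h x (last L # as))"

lemma ginv_prod_update_left:
  assumes "j < length rs"
  shows "ginv_prod G x (rs[j := l]) as = ginv G x l (as ! j) * (\<Prod>k\<in>{..<length rs} - {j}. ginv G x (rs ! k) (as ! k))"
  unfolding ginv_prod_def using assms by (subst prod.remove[of _ j]) (auto intro!: prod.cong)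

lemma ginv_prod_update_right:
  assumes "j < length rs" "length as = length rs"
  shows "ginv_prod G x rs (as[j := l]) = ginv G x (rs ! j) l * (\<Prod>k\<in>{..<length rs} - {j}. ginv G x (rs ! k) (as ! k))"
  unfolding ginv_prod_def using assms by (subst prod.remove[of _ j]) (auto intro!: prod.cong)

lemma sum_derivation_action_adjoint_left:
  "(\<Sum>rs | length rs = P. \<Sum>as | length as = Q. derivation_action \<Gamma> A rs * M rs as * H as) =
    (\<Sum>rs | length rs = P. \<Sum>as | length as = Q. A rs * derivation_action (\<lambda>a b. \<Gamma> b a) (\<lambda>r. M r as) rs * H as)"
proof -
  have "(\<Sum>rs | length rs = P. derivation_action \<Gamma> A rs * (M rs as * H as)) =
      (\<Sum>rs | length rs = P. A rs * (derivation_action (\<lambda>a b. \<Gamma> b a) (\<lambda>r. M r as) rs * H as))" for as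
    using sum_derivation_action_adjoint[of \<Gamma> A "\<lambda>r. M r as * H as" P]
    by (simp add: derivation_action_mult_right)
  then show ?thesis
    by (subst (1 2) sum.swap) (simp add: mult.assoc)
qed

lemma sum_derivation_action_adjoint_right:
  "(\<Sum>rs | length rs = P. \<Sum>as | length as = Q. A rs * M rs as * derivation_action \<Gamma> H as) =
    (\<Sum>rs | length rs = P. \<Sum>as | length as = Q. A rs * derivation_action (\<lambda>a b. \<Gamma> b a) (M rs) as * H as)"
proof -
  have "(\<Sum>rs | length rs = P. \<Sum>as | length as = Q. A rs * M rs as * derivation_action \<Gamma> H as) =
      (\<Sum>rs | length rs = P. A rs * (\<Sum>as | length as = Q. derivation_action \<Gamma> H as * M rs as))"
    by (simp add: sum_distrib_left mult_ac)
  also have "\<dots> = (\<Sum>rs | length rs = P. A rs * (\<Sum>as | length as = Q. H as * derivation_action (\<lambda>a b. \<Gamma> b a) (M rs) as))"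
    by (simp only: sum_derivation_action_adjoint)
  also have "\<dots> = (\<Sum>rs | length rs = P. \<Sum>as | length as = Q. A rs * derivation_action (\<lambda>a b. \<Gamma> b a) (M rs) as * H as)"
    by (simp add: sum_distrib_left mult_ac)
  finally show ?thesis .
qed

lemma derivation_action_contraction:
  "derivation_action \<Gamma> (contraction G P T h x) (ms @ [n]) =
    (\<Sum>rs | length rs = P. \<Sum>as | length as = P.
      derivation_action \<Gamma> (\<lambda>zs. T x (zs @ rs)) ms * ginv_prod G x rs as * h x (n # as)
      + T x (ms @ rs) * ginv_prod G x rs as * (\<Sum>l\<in>UNIV. \<Gamma> l n * h x (l # as)))"
proof -
  have "(\<Sum>l\<in>UNIV. \<Gamma> l n * contraction G P T h x (ms @ [l])) =
      (\<Sum>rs | length rs = P. \<Sum>as | length as = P.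
        T x (ms @ rs) * ginv_prod G x rs as * (\<Sum>l\<in>UNIV. \<Gamma> l n * h x (l # as)))"
    unfolding contraction_def sum_distrib_left
    by (subst sum.swap, rule sum.cong[OF refl], subst sum.swap) (simp add: algebra_simps)
  then show ?thesis
    unfolding derivation_action_append derivation_action_singleton sum.distrib
    by (simp add: contraction_def derivation_action_sum derivation_action_mult_right)
qed

context
  fixes U :: "(real^'n::finite) set" and G :: "real^'n \<Rightarrow> real^'n^'n"
  assumes U: "open U" and G: "metric_field U G"
begin

lemma Cinf_on_ginv_prod: "Cinf_on U (\<lambda>y. ginv_prod G y rs as)"
  unfolding ginv_prod_def by (intro Cinf_on_prod[OF U] Cinf_on_ginv[OF U G] finite_lessThan)

lemma tensor_field_contraction:
  assumes "tensor_field U (m + P) T" "tensor_field U (Suc P) h"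
  shows "tensor_field U (Suc m) (contraction G P T h)"
  unfolding tensor_field_def
proof (intro allI impI)
  fix L :: "'n list"
  assume "length L = Suc m"
  then have "Cinf_on U (\<lambda>y. T y (butlast L @ rs))" if "length rs = P" for rs
    using assms(1) that unfolding tensor_field_def by simp
  moreover have "Cinf_on U (\<lambda>y. h y (last L # as))" if "length as = P" for as
    using assms(2) that unfolding tensor_field_def by simp
  ultimately show "Cinf_on U (\<lambda>y. contraction G P T h y L)"
    unfolding contraction_def
    by (intro Cinf_on_sum[OF U] Cinf_on_mult[OF U] finite_lists_of_length Cinf_on_ginv_prod) auto
qed

lemma pd_ginv_prod:
  assumes x: "x \<in> U" and "length as = length rs"
  shows "pd s (\<lambda>y. ginv_prod G y rs as) x =
    - derivation_action (\<lambda>l k. christoffel G x k s l) (\<lambda>r. ginv_prod G x r as) rs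
    - derivation_action (\<lambda>l k. christoffel G x k s l) (ginv_prod G x rs) as"
proof -
  have "pd s (\<lambda>y. ginv_prod G y rs as) x =
      (\<Sum>j<length rs. pd s (\<lambda>y. ginv G y (rs ! j) (as ! j)) x
        * (\<Prod>k\<in>{..<length rs} - {j}. ginv G x (rs ! k) (as ! k)))"
    unfolding ginv_prod_def by (rule pd_prod) (auto intro: ginv_differentiable[OF U G x])
  also have "\<dots> = (\<Sum>j<length rs. \<Sum>l\<in>UNIV.
      - (christoffel G x (rs ! j) s l * ginv_prod G x (rs[j := l]) as)
      - christoffel G x (as ! j) s l * ginv_prod G x rs (as[j := l]))"
    using assms
    by (intro sum.cong refl) (simp add: pd_ginv_christoffel[OF U G x] ginv_prod_update_left
        ginv_prod_update_right sum_distrib_left sum_distrib_right sum_subtractf sum_negf algebra_simps)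
  finally show ?thesis
    using assms by (simp add: derivation_action_def sum_subtractf sum_negf sum.distrib)
qed

lemma pd_contraction:
  assumes x: "x \<in> U"
    and T: "tensor_field U (length ms + P) T" and h: "tensor_field U (Suc P) h"
  shows "pd s (\<lambda>y. contraction G P T h y (ms @ [n])) x =
    (\<Sum>rs | length rs = P. \<Sum>as | length as = P.
        pd s (\<lambda>y. T y (ms @ rs)) x * ginv_prod G x rs as * h x (n # as)
      + T x (ms @ rs) * pd s (\<lambda>y. ginv_prod G y rs as) x * h x (n # as)
      + T x (ms @ rs) * ginv_prod G x rs as * pd s (\<lambda>y. h y (n # as)) x)"
proof -
  have dT: "(\<lambda>y. T y (ms @ rs)) differentiable (at x)" if "length rs = P" for rs
    using T that unfolding tensor_field_def by (intro Cinf_on_differentiable[OF U _ x]) simp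
  have dh: "(\<lambda>y. h y (n # as)) differentiable (at x)" if "length as = P" for as
    using h that unfolding tensor_field_def by (intro Cinf_on_differentiable[OF U _ x]) simp
  have dg: "(\<lambda>y. ginv_prod G y rs as) differentiable (at x)" for rs as
    by (rule Cinf_on_differentiable[OF U Cinf_on_ginv_prod x])
  have "pd s (\<lambda>y. contraction G P T h y (ms @ [n])) x =
      (\<Sum>rs | length rs = P. pd s (\<lambda>y. \<Sum>as | length as = P.
         T y (ms @ rs) * ginv_prod G y rs as * h y (n # as)) x)"
    unfolding contraction_def butlast_snoc last_snoc
    by (rule pd_sum) (auto intro!: differentiable_sum differentiable_mult dT dg dh)
  also have "\<dots> = (\<Sum>rs | length rs = P. \<Sum>as | length as = P.
      pd s (\<lambda>y. T y (ms @ rs) * ginv_prod G y rs as * h y (n # as)) x)"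
    by (intro sum.cong refl pd_sum) (auto intro!: differentiable_mult dT dg dh)
  finally show ?thesis
    by (simp add: pd_mult3 dT dh dg)
qed

text \<open>The connection terms of the contracted indices of \<open>T\<close> and \<open>h\<close> cancel against the
  derivative of the inverse metric.\<close>

lemma nabla_contraction:
  assumes x: "x \<in> U"
    and T: "tensor_field U (length ms + P) T" and h: "tensor_field U (Suc P) h"
    and parallel: "\<And>zs. length zs = Suc (Suc P) \<Longrightarrow> nabla G h x zs = 0"
  shows "nabla G (contraction G P T h) x (s # ms @ [n]) = contraction G P (nabla G T) h x (s # ms @ [n])"
proof -
  have butlast_Cons_snoc: "butlast (s # ms @ [n]) = s # ms" and last_Cons_snoc: "last (s # ms @ [n]) = n"
    by simp_all
  define \<Gamma> where "\<Gamma> = (\<lambda>l k. christoffel G x l s k)"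
  define \<Gamma>' where "\<Gamma>' = (\<lambda>l k. \<Gamma> k l)"
  define g where "g = ginv_prod G x"
  have pdT: "pd s (\<lambda>y. T y (ms @ rs)) x = nabla G T x (s # ms @ rs)
      + derivation_action \<Gamma> (\<lambda>zs. T x (zs @ rs)) ms + derivation_action \<Gamma> (\<lambda>zs. T x (ms @ zs)) rs" for rs
    by (simp add: nabla_Cons_derivation_action derivation_action_append \<Gamma>_def)
  have pdg: "pd s (\<lambda>y. ginv_prod G y rs as) x =
      - derivation_action \<Gamma>' (\<lambda>r. g r as) rs - derivation_action \<Gamma>' (g rs) as"
    if "length rs = P" "length as = P" for rs as
    using that by (simp add: pd_ginv_prod[OF x] \<Gamma>'_def \<Gamma>_def g_def)
  have pdh: "pd s (\<lambda>y. h y (n # as)) x =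
      (\<Sum>l\<in>UNIV. \<Gamma> l n * h x (l # as)) + derivation_action \<Gamma> (\<lambda>zs. h x (n # zs)) as"
    if "length as = P" for as
    using parallel[of "s # n # as"] that derivation_action_append[of _ _ "[n]" as]
    by (simp add: nabla_Cons_derivation_action derivation_action_singleton \<Gamma>_def)
  have "pd s (\<lambda>y. contraction G P T h y (ms @ [n])) x =
      contraction G P (nabla G T) h x (s # ms @ [n])
      + derivation_action \<Gamma> (contraction G P T h x) (ms @ [n])
      + ((\<Sum>rs | length rs = P. \<Sum>as | length as = P.
            derivation_action \<Gamma> (\<lambda>zs. T x (ms @ zs)) rs * g rs as * h x (n # as))
        - (\<Sum>rs | length rs = P. \<Sum>as | length as = P.
            T x (ms @ rs) * derivation_action \<Gamma>' (\<lambda>r. g r as) rs * h x (n # as)))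
      + ((\<Sum>rs | length rs = P. \<Sum>as | length as = P.
            T x (ms @ rs) * g rs as * derivation_action \<Gamma> (\<lambda>zs. h x (n # zs)) as)
        - (\<Sum>rs | length rs = P. \<Sum>as | length as = P.
            T x (ms @ rs) * derivation_action \<Gamma>' (g rs) as * h x (n # as)))"
    unfolding pd_contraction[OF x T h] derivation_action_contraction
    unfolding contraction_def butlast_Cons_snoc last_Cons_snoc
    by (simp only: sum.distrib[symmetric] sum_subtractf[symmetric])
      (intro sum.cong refl, simp add: pdT pdg pdh g_def algebra_simps)
  also have "\<dots> = contraction G P (nabla G T) h x (s # ms @ [n])
      + derivation_action \<Gamma> (contraction G P T h x) (ms @ [n])"
    unfolding \<Gamma>'_def sum_derivation_action_adjoint_left sum_derivation_action_adjoint_right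
    by simp
  finally show ?thesis
    unfolding nabla_Cons_derivation_action \<Gamma>_def by simp
qed

end

section \<open>The symmetric tensor K\<close>

lemma Kfield_eq_contraction:
  "Kfield G (Suc P) f h y [a, b] = (contraction G P f h y [a, b] + contraction G P f h y [b, a]) / 2"
proof -
  have "contr G (Suc P) f h y m n = contraction G P f h y [m, n]" for m n
    unfolding contr_def contraction_def ginv_prod_def by (intro sum.cong refl) auto
  then show ?thesis
    unfolding Kfield_def by simp
qed

lemma antisymmetric_nabla_nabla_AAT:
  assumes "AAT U G (Suc P) f" "x \<in> U" "length rs = P"
  shows "nabla G (nabla G f) x (w # a # s # rs) = - nabla G (nabla G f) x (w # s # a # rs)"
proof -
  have "symmetrize {1..<3} (nabla G (nabla G f) x) (w # s # a # rs) = 0"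
    using assms unfolding AAT_def by simp
  moreover have "{1..<3} = {1, 2 :: nat}"
    by auto
  ultimately show ?thesis
    by (simp add: symmetrize_doubleton perm_idx_transpose)
qed

lemma antisymmetric_contraction_nabla_nabla_AAT:
  assumes "AAT U G (Suc P) f" "x \<in> U"
  shows "contraction G P (nabla G (nabla G f)) h x [w, a, s, b] =
    - contraction G P (nabla G (nabla G f)) h x [w, s, a, b]"
proof -
  have "contraction G P (nabla G (nabla G f)) h x [w, a, s, b] =
      (\<Sum>rs | length rs = P. \<Sum>as | length as = P.
        - (nabla G (nabla G f) x (w # s # a # rs) * ginv_prod G x rs as * h x (b # as)))"
    unfolding contraction_def
    by (intro sum.cong refl) (simp add: antisymmetric_nabla_nabla_AAT[OF assms, where w=w and a=a and s=s])
  then show ?thesis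
    by (simp add: contraction_def sum_negf)
qed

context
  fixes U :: "(real^'n::finite) set" and G :: "real^'n \<Rightarrow> real^'n^'n"
  assumes U: "open U" and G: "metric_field U G"
begin

lemma sym_tensor_field_Kfield:
  assumes "tensor_field U (Suc P) f" "tensor_field U (Suc P) h"
  shows "sym_tensor_field U 2 (Kfield G (Suc P) f h)"
proof -
  have C: "tensor_field U 2 (contraction G P f h)"
    using tensor_field_contraction[OF U G, of 1 P f h] assms by (simp add: numeral_2_eq_2)
  have "length is = 2 \<Longrightarrow> Cinf_on U (\<lambda>y. Kfield G (Suc P) f h y is)" for "is"
    using C unfolding tensor_field_def
    by (auto simp: length_Suc_conv numeral_2_eq_2 Kfield_eq_contraction
        intro!: Cinf_on_divide[OF U] Cinf_on_add[OF U] Cinf_on_const[OF U])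
  moreover have "Kfield G (Suc P) f h y is = symmetrize {0..<2} (Kfield G (Suc P) f h y) is"
    if len: "length is = 2" for y "is"
  proof -
    obtain a b where "is = [a, b]"
      using len by (auto simp: length_Suc_conv numeral_2_eq_2)
    moreover have "{0..<2} = {0, 1 :: nat}"
      by auto
    ultimately show ?thesis
      by (simp add: symmetrize_doubleton perm_idx_transpose Kfield_eq_contraction field_simps)
  qed
  ultimately show ?thesis
    unfolding sym_tensor_field_def tensor_field_def by blast
qed

lemma nabla_nabla_Kfield:
  assumes f: "tensor_field U (Suc P) f" and h: "tensor_field U (Suc P) h"
    and parallel: "\<forall>y\<in>U. \<forall>is. length is = Suc (Suc P) \<longrightarrow> nabla G h y is = 0"
    and x: "x \<in> U"
  shows "nabla G (nabla G (Kfield G (Suc P) f h)) x [w, s, a, b] =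
    (contraction G P (nabla G (nabla G f)) h x [w, s, a, b]
      + contraction G P (nabla G (nabla G f)) h x [w, s, b, a]) / 2"
proof -
  let ?K = "Kfield G (Suc P) f h"
  let ?C1 = "contraction G P f h" and ?C2 = "contraction G P (nabla G f) h"
  have nabla_f: "tensor_field U (Suc (Suc P)) (nabla G f)"
    by (rule tensor_field_nabla[OF U G f])
  have C1: "tensor_field U 2 ?C1" and C2: "tensor_field U 3 ?C2"
    using tensor_field_contraction[OF U G, of 1 P f h] tensor_field_contraction[OF U G, of 2 P "nabla G f" h]
      f h nabla_f by (simp_all add: numeral_2_eq_2 numeral_3_eq_3)
  have nabla_C1: "nabla G ?C1 y [s, a, b] = ?C2 y [s, a, b]" if "y \<in> U" for y s a b
    using nabla_contraction[OF U G that, of "[a]" P f h s b] f h parallel that by simp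
  have nabla_C2: "nabla G ?C2 x [w, s, a, b] = contraction G P (nabla G (nabla G f)) h x [w, s, a, b]" for w s a b
    using nabla_contraction[OF U G x, of "[s, a]" P "nabla G f" h w b] nabla_f h parallel x by simp
  have nabla_K: "nabla G ?K y [s, a, b] = (?C2 y [s, a, b] + ?C2 y [s, b, a]) / 2"
    if "y \<in> U" for y s a b
  proof -
    have "nabla G ?K y (s # [a, b]) =
        (nabla G ?C1 y (s # [a, b]) + nabla G ?C1 y (s # perm_idx (Transposition.transpose 0 1) [a, b])) / 2"
      by (rule nabla_symmetrization_pair[OF U that])
        (use C1 in \<open>auto simp: permutes_swap_id Kfield_eq_contraction length_Suc_conv numeral_2_eq_2 perm_idx_transpose\<close>)
    then show ?thesis
      by (simp add: perm_idx_transpose nabla_C1 that)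
  qed
  have "nabla G (nabla G ?K) x (w # [s, a, b]) =
      (nabla G ?C2 x (w # [s, a, b]) + nabla G ?C2 x (w # perm_idx (Transposition.transpose 1 2) [s, a, b])) / 2"
    by (rule nabla_symmetrization_pair[OF U x])
      (use C2 in \<open>auto simp: permutes_swap_id nabla_K length_Suc_conv numeral_3_eq_3 perm_idx_transpose\<close>)
  then show ?thesis
    by (simp add: perm_idx_transpose nabla_C2)
qed

lemma symmetrize_nabla_nabla_Kfield:
  assumes f: "AAT U G (Suc P) f" and h: "tensor_field U (Suc P) h"
    and parallel: "\<forall>y\<in>U. \<forall>is. length is = Suc (Suc P) \<longrightarrow> nabla G h y is = 0"
    and x: "x \<in> U" and L: "length L = 4"
  shows "symmetrize {1..<4} (nabla G (nabla G (Kfield G (Suc P) f h)) x) L = 0"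
proof -
  let ?C = "contraction G P (nabla G (nabla G f)) h x"
  have f_tensor: "tensor_field U (Suc P) f"
    using f by (simp add: AAT_def antisym_tensor_field_def)
  have length4: "length L' = 4 \<longleftrightarrow> (\<exists>w s a b. L' = [w, s, a, b])" for L' :: "'n list"
    by (auto simp: length_Suc_conv numeral_eq_Suc)
  have "symmetrize {1..<4} (nabla G (nabla G (Kfield G (Suc P) f h)) x) L =
      symmetrize {1..<4} (\<lambda>L. (?C L + ?C (perm_idx (Transposition.transpose 2 3) L)) / 2) L"
  proof (rule symmetrize_cong)
    fix L' :: "'n list"
    assume "length L' = length L"
    then obtain w s a b where "L' = [w, s, a, b]"
      using L length4[of L'] by auto
    then show "nabla G (nabla G (Kfield G (Suc P) f h)) x L' =
        (?C L' + ?C (perm_idx (Transposition.transpose 2 3) L')) / 2"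
      by (simp add: nabla_nabla_Kfield[OF f_tensor h parallel x] perm_idx_transpose)
  qed
  also have "\<dots> = symmetrize {1..<4} ?C L"
    using L by (intro symmetrize_average_perm_idx) (auto simp: permutes_swap_id)
  also have "\<dots> = 0"
  proof (rule symmetrize_eq_0_if_antisymmetric)
    show "Transposition.transpose 1 2 permutes {1..<4::nat}"
      by (simp add: permutes_swap_id)
    show "?C (perm_idx (Transposition.transpose 1 2) L') = - ?C L'" if len: "length L' = length L" for L'
    proof -
      obtain w s a b where "L' = [w, s, a, b]"
        using len L length4[of L'] by auto
      then show ?thesis
        by (simp add: perm_idx_transpose
            antisymmetric_contraction_nabla_nabla_AAT[OF f x, where w=w and a=a and s=s and b=b])
    qed
  qed (use L in auto)
  finally show ?thesis .
qed

end

theorem proposition3: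
  fixes U :: "(real^'n::finite) set" and G :: "real^'n \<Rightarrow> real^'n^'n"
    and f h :: "real^'n \<Rightarrow> 'n list \<Rightarrow> real" and p :: nat
  assumes "open U"
    and "metric_field U G"
    and "1 \<le> p"
    and "AAT U G p f"
    and "antisym_tensor_field U p h"
    and "\<forall>x\<in>U. \<forall>is. length is = Suc p \<longrightarrow> nabla G h x is = 0"
  shows "SAT U G 2 (Kfield G p f h)"
proof -
  obtain P where p: "p = Suc P"
    using assms(3) by (cases p) auto
  have f: "tensor_field U p f" and h: "tensor_field U p h"
    using assms(4,5) by (simp_all add: AAT_def antisym_tensor_field_def)
  show ?thesis
    using sym_tensor_field_Kfield[OF assms(1,2)] symmetrize_nabla_nabla_Kfield[OF assms(1,2)]
      f h assms(4,6) unfolding SAT_def p by simp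
qed

end
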